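(* Let $n\ge2$ and let $T_n(t)=\sum_{m=1}^n(a_m\cos mt+b_m\sin mt)$ with $a_m,b_m\in\mathbb{R}$. For $\nu\in\{1,\dots,n\}$, let $t_1,\dots,t_{2n+1}\in[0,2\pi)$ be the arguments of the $2n+1$ roots of the polynomial $s_n(z)+z^{2n+1}s_n(1/z)$, where $s_n(z)=\sum_{j=0}^{\lfloor n/\nu\rfloor}\frac{(-z^\nu)^j}{\nu^jj!}$. Then \[a_\nu=\sum_{k=1}^{2n+1}T_n(-t_k),\qquad b_\nu=\sum_{k=1}^{2n+1}T_n\!\left(\frac{\pi}{2\nu}-t_k\right),\qquad\nu=1,\dots,n.\] *)

theory Defs
  imports "HOL-Analysis.Analysis" "HOL-Computational_Algebra.Computational_Algebra"
begin

definition trig_poly :: "nat \<Rightarrow> (nat \<Rightarrow> real) \<Rightarrow> (nat \<Rightarrow> real) \<Rightarrow> real \<Rightarrow> real" where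
  "trig_poly n a b t = (\<Sum>m=1..n. a m * cos (real m * t) + b m * sin (real m * t))"

definition s_coeff :: "nat \<Rightarrow> nat \<Rightarrow> complex" where
  "s_coeff \<nu> j = (-1) ^ j / (of_nat \<nu> ^ j * of_nat (fact j))"

definition s_poly :: "nat \<Rightarrow> nat \<Rightarrow> complex poly" where
  "s_poly n \<nu> = (\<Sum>j=0..n div \<nu>. monom (s_coeff \<nu> j) (\<nu> * j))"

text \<open>z^(2n+1) s_n(1/z), written out termwise (valid since nu j <= n < 2n+1).\<close>
definition s_rev_poly :: "nat \<Rightarrow> nat \<Rightarrow> complex poly" where
  "s_rev_poly n \<nu> = (\<Sum>j=0..n div \<nu>. monom (s_coeff \<nu> j) (2 * n + 1 - \<nu> * j))"

definition root_poly :: "nat \<Rightarrow> nat \<Rightarrow> complex poly" where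
  "root_poly n \<nu> = s_poly n \<nu> + s_rev_poly n \<nu>"

end

theory Submission
  imports Defs "HOL-Complex_Analysis.Conformal_Mappings"
begin

text \<open>
  The partial sum \<open>s\<^sub>n\<close> of \<open>exp(-z^\<nu>/\<nu>)\<close> has no zeros in the closed unit disc, and the
  maximum modulus principle gives \<open>|z^(2n+1) s\<^sub>n(1/z)| \<le> |z| |s\<^sub>n(z)|\<close> there; hence the
  self-reciprocal polynomial \<open>P(z) = s\<^sub>n(z) + z^(2n+1) s\<^sub>n(1/z)\<close> has all its roots \<open>e^(i t\<^sub>k)\<close>
  on the unit circle. Up to degree \<open>n\<close>, \<open>P\<close> agrees with \<open>s\<^sub>n\<close>, which satisfies
  \<open>s' = -z^(\<nu>-1) s\<close> up to that degree, so Newton's identities give the power sums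
  \<open>\<Sum>\<^sub>k e^(i m t\<^sub>k) = [m = \<nu>]\<close> for \<open>1 \<le> m \<le> n\<close>. Expanding \<open>T\<^sub>n(c - t\<^sub>k)\<close> and summing
  over \<open>k\<close> leaves \<open>a\<^sub>\<nu> cos(\<nu> c) + b\<^sub>\<nu> sin(\<nu> c)\<close>; take \<open>c = 0\<close> and \<open>c = \<pi>/(2\<nu>)\<close>.
\<close>

lemma fps_deriv_prod_mset_linear:
  fixes R :: "complex multiset"
  shows "fps_deriv (\<Prod>z\<in>#R. 1 - fps_const z * fps_X)
       = - (\<Prod>z\<in>#R. 1 - fps_const z * fps_X) * Abs_fps (\<lambda>k. \<Sum>z\<in>#R. z ^ Suc k)"
proof (induction R)
  case empty
  then show ?case by (simp add: fps_eq_iff)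
next
  case (add z R)
  define F where "F = (\<Prod>z\<in>#R. 1 - fps_const z * fps_X)"
  define G where "G = Abs_fps (\<lambda>k. \<Sum>z\<in>#R. z ^ Suc k)"
  define H where "H = Abs_fps (\<lambda>k. z ^ Suc k)"
  have geometric: "(1 - fps_const z * fps_X) * H = fps_const z"
  proof (rule fps_ext)
    fix k
    have "(fps_const z * fps_X * H) $ k = z * (fps_X * H) $ k"
      by (simp add: mult.assoc)
    then show "((1 - fps_const z * fps_X) * H) $ k = fps_const z $ k"
      by (cases k) (auto simp: H_def algebra_simps)
  qed
  have sums: "Abs_fps (\<lambda>k. \<Sum>z\<in>#add_mset z R. z ^ Suc k) = G + H"
    by (simp add: G_def H_def fps_eq_iff)
  have "fps_deriv ((1 - fps_const z * fps_X) * F)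
      = - fps_const z * F + (1 - fps_const z * fps_X) * fps_deriv F"
    by (simp add: fps_deriv_mult)
  also have "\<dots> = - ((1 - fps_const z * fps_X) * H) * F + (1 - fps_const z * fps_X) * (- F * G)"
    unfolding geometric F_def G_def add.IH by simp
  also have "\<dots> = - ((1 - fps_const z * fps_X) * F) * (G + H)"
    by (simp add: algebra_simps)
  finally show ?case
    unfolding sums by (simp add: F_def)
qed

text \<open>Newton's identities in generating-function form: if the logarithmic derivative
  of \<open>\<Prod>(1 - z X)\<close> agrees with \<open>-H\<close> below degree \<open>N\<close>, then the power sums of the \<open>z\<close>
  are the coefficients of \<open>H\<close> there.\<close>

lemma power_sums_from_fps_ode:
  fixes R :: "complex multiset" and H :: "complex fps"
  defines "F \<equiv> \<Prod>z\<in>#R. 1 - fps_const z * fps_X"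
  assumes ode: "\<And>k. k < N \<Longrightarrow> (fps_deriv F + H * F) $ k = 0" and "k < N"
  shows "(\<Sum>z\<in>#R. z ^ Suc k) = H $ k"
proof -
  define G where "G = Abs_fps (\<lambda>k. \<Sum>z\<in>#R. z ^ Suc k)"
  have F0: "F $ 0 = 1"
    unfolding F_def by (induction R) auto
  have "fps_deriv F + H * F = F * (H - G)"
    unfolding F_def G_def fps_deriv_prod_mset_linear by (simp add: algebra_simps)
  then have "H - G = inverse F * (fps_deriv F + H * F)"
    using inverse_mult_eq_1[of F] F0 by (simp add: mult.assoc[symmetric])
  then have "(H - G) $ k = (\<Sum>i=0..k. inverse F $ i * (fps_deriv F + H * F) $ (k - i))"
    by (simp add: fps_mult_nth)
  also have "\<dots> = 0"
    using ode \<open>k < N\<close> by (intro sum.neutral ballI) (metis diff_le_self le_less_trans mult_zero_right)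
  finally have "(H - G) $ k = 0" .
  then show ?thesis by (simp add: G_def)
qed

lemma fps_of_poly_reflect_prod_mset_linear:
  fixes R :: "complex multiset"
  shows "fps_of_poly (reflect_poly (\<Prod>z\<in>#R. [:-z, 1:])) = (\<Prod>z\<in>#R. 1 - fps_const z * fps_X)"
proof (induction R)
  case (add z R)
  have "fps_of_poly (reflect_poly [:-z, 1:]) = 1 - fps_const z * fps_X"
    by (simp add: reflect_poly_def fps_eq_iff coeff_pCons split: nat.split)
  with add.IH show ?case
    by (simp only: image_mset_add_mset prod_mset.add_mset reflect_poly_mult fps_of_poly_mult)
qed simp

lemma fps_of_poly_self_reciprocal:
  fixes p :: "complex poly"
  assumes "reflect_poly p = p" and "lead_coeff p = 1"
  shows "fps_of_poly p = (\<Prod>z\<in>#proots p. 1 - fps_const z * fps_X)"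
proof -
  have "p = (\<Prod>z\<in>#proots p. [:-z, 1:])"
    using complex_poly_decompose_multiset[of p] assms(2) by simp
  then have "p = reflect_poly (\<Prod>z\<in>#proots p. [:-z, 1:])"
    using assms(1) by simp
  then show ?thesis
    by (metis fps_of_poly_reflect_prod_mset_linear)
qed

lemma roots_on_circle_if_reflect_poly_eq:
  fixes p :: "complex poly"
  assumes reflect: "reflect_poly p = p" and no_inner_root: "\<And>w. cmod w < 1 \<Longrightarrow> poly p w \<noteq> 0"
    and root: "poly p z = 0"
  shows "cmod z = 1"
proof -
  have "\<not> cmod z < 1" using no_inner_root root by blast
  moreover have "\<not> cmod z > 1"
  proof
    assume "cmod z > 1"
    then have "z \<noteq> 0" and "cmod (inverse z) < 1"
      by (auto simp: norm_inverse inverse_less_1_iff)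
    then have "poly p (inverse z) \<noteq> 0" using no_inner_root by blast
    moreover have "poly p (inverse z) = inverse z ^ degree p * poly p z"
      using poly_reflect_poly_nz[of "inverse z" p] \<open>z \<noteq> 0\<close> reflect by simp
    ultimately show False using root by simp
  qed
  ultimately show ?thesis by simp
qed

lemma norm_le_in_disc_if_norm_le_on_circle:
  fixes f g :: "complex \<Rightarrow> complex"
  assumes holo: "f holomorphic_on cball 0 1" "g holomorphic_on cball 0 1"
    and nonzero: "\<And>w. cmod w \<le> 1 \<Longrightarrow> f w \<noteq> 0"
    and circle: "\<And>u. cmod u = 1 \<Longrightarrow> cmod (g u) \<le> cmod (f u)"
    and "cmod z \<le> 1"
  shows "cmod (g z) \<le> cmod (f z)"
proof -
  have quotient: "(\<lambda>w. g w / f w) holomorphic_on cball 0 1"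
    using holo nonzero by (auto intro!: holomorphic_intros)
  have "cmod (g z / f z) \<le> 1"
  proof (rule maximum_modulus_frontier[of "\<lambda>w. g w / f w" "cball 0 1"])
    show "(\<lambda>w. g w / f w) holomorphic_on interior (cball 0 1)"
      using quotient interior_subset by (rule holomorphic_on_subset)
    show "continuous_on (closure (cball 0 1)) (\<lambda>w. g w / f w)"
      using quotient by (simp add: holomorphic_on_imp_continuous_on)
    show "cmod (g u / f u) \<le> 1" if "u \<in> frontier (cball 0 1)" for u
      using that circle[of u] nonzero[of u] by (simp add: norm_divide divide_le_eq_1)
  qed (use \<open>cmod z \<le> 1\<close> in auto)
  then show ?thesis
    using nonzero[OF \<open>cmod z \<le> 1\<close>] by (simp add: norm_divide divide_le_eq_1)
qed

lemma sum_inverse_fact_tail_le: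
  assumes "2 \<le> M"
  shows "(\<Sum>j=3..M. 1 / fact j) + 1 / (2 * fact M) \<le> (1/4 :: real)"
  using assms
proof (induction M rule: nat_induct_at_least)
  case base
  then show ?case by (simp add: fact_numeral)
next
  case (Suc M)
  have "1 / fact (Suc M) + 1 / (2 * fact (Suc M)) = (3/2) / (fact (Suc M) :: real)"
    using add_divide_distrib[of 1 "1/2" "fact (Suc M) :: real"] by simp
  also have "\<dots> = (3/2) / ((real M + 1) * fact M)"
    by simp
  also have "\<dots> \<le> (3/2) / (3 * fact M)"
    using Suc.hyps by (intro divide_left_mono mult_right_mono mult_pos_pos) auto
  also have "\<dots> = 1 / (2 * fact M)" by simp
  finally have "1 / fact (Suc M) + 1 / (2 * fact (Suc M)) \<le> 1 / (2 * fact M :: real)" .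
  moreover have "(\<Sum>j=3..Suc M. 1 / fact j) = (\<Sum>j=3..M. 1 / fact j) + (1 / fact (Suc M) :: real)"
    using Suc.hyps by (simp add: sum.cl_ivl_Suc)
  ultimately show ?case using Suc.IH by linarith
qed

lemma norm_exp_taylor2_ge:
  fixes w :: complex
  assumes "cmod w \<le> 1"
  shows "1/4 \<le> cmod (1 + w + w^2 / 2)"
proof -
  obtain x y where w: "w = Complex x y" by (cases w)
  have unit_disc: "x^2 + y^2 \<le> 1" using assms by (simp add: w cmod_def power2_eq_square)
  define r where "r = (1 + x)^2 + y^2"
  have re: "Re (1 + w + w^2 / 2) = 1 + x + (x * x - y * y) / 2"
    and im: "Im (1 + w + w^2 / 2) = y + x * y"
    by (simp_all add: w power2_eq_square)
  have "(cmod (1 + w + w^2 / 2))^2 = ((1 - r) / 2)^2 + (1 + x)^2"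
    unfolding cmod_power2 re im r_def by (simp add: power2_eq_square field_simps)
  moreover have "(1/4)^2 \<le> ((1 - r) / 2)^2 + (1 + x)^2"
  proof (cases "r \<le> 1/2")
    case True
    then have "(1/4)^2 \<le> ((1 - r) / 2)^2" by (intro power_mono) auto
    then show ?thesis by (smt (verit) zero_le_power2)
  next
    case False
    have "r \<le> 2 + 2 * x" using unit_disc by (simp add: r_def power2_eq_square algebra_simps)
    then have "(1/4)^2 \<le> (1 + x)^2" using False by (intro power_mono) auto
    then show ?thesis by (smt (verit) zero_le_power2)
  qed
  ultimately have "(1/4)^2 \<le> (cmod (1 + w + w^2 / 2))^2" by simp
  then show ?thesis by (rule power2_le_imp_le) simp
qed

text \<open>Split off \<open>1 + w + w^2/2\<close>: its modulus is at least \<open>1/4\<close>, while the remaining terms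
  have modulus at most \<open>\<Sum>\<^sub>j\<^sub>\<ge>\<^sub>3 1/j! < 1/4\<close>.\<close>

lemma exp_partial_sum_nonzero:
  fixes w :: complex
  assumes "cmod w \<le> 1" and "M \<noteq> 1"
  shows "(\<Sum>j=0..M. w ^ j / fact j) \<noteq> 0"
proof (cases "M = 0")
  case False
  with assms have "2 \<le> M" by simp
  have split: "(\<Sum>j=0..M. w ^ j / fact j) = (1 + w + w^2 / 2) + (\<Sum>j=3..M. w ^ j / fact j)"
    using \<open>2 \<le> M\<close>
    by (simp add: sum.atLeast_Suc_atMost numeral_3_eq_3 numeral_2_eq_2 fact_numeral)
  have "cmod (\<Sum>j=3..M. w ^ j / fact j) \<le> (\<Sum>j=3..M. cmod w ^ j / fact j)"
    using norm_sum[of "\<lambda>j. w ^ j / fact j"] by (simp add: norm_divide norm_power)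
  also have "\<dots> \<le> (\<Sum>j=3..M. 1 / fact j)"
    using assms(1) by (intro sum_mono divide_right_mono power_le_one) auto
  also have "\<dots> < 1/4"
    using sum_inverse_fact_tail_le[OF \<open>2 \<le> M\<close>] by (smt (verit) divide_pos_pos fact_gt_zero)
  finally have tail: "cmod (\<Sum>j=3..M. w ^ j / fact j) < cmod (1 + w + w^2 / 2)"
    using norm_exp_taylor2_ge[OF assms(1)] by linarith
  show ?thesis
  proof
    assume "(\<Sum>j=0..M. w ^ j / fact j) = 0"
    then have "1 + w + w^2 / 2 = - (\<Sum>j=3..M. w ^ j / fact j)"
      unfolding split by (simp add: eq_neg_iff_add_eq_0)
    with tail show False by simp
  qed
qed simp

lemma Re_sum_mset: "Re (\<Sum>z\<in>#R. f z) = (\<Sum>z\<in>#R. Re (f z))"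
  by (induction R) auto

lemma Im_sum_mset: "Im (\<Sum>z\<in>#R. f z) = (\<Sum>z\<in>#R. Im (f z))"
  by (induction R) auto

lemma sum_mset_sum_swap: "(\<Sum>z\<in>#R. \<Sum>m\<in>A. f m z) = (\<Sum>m\<in>A. \<Sum>z\<in>#R. f m z)"
  by (induction R) (simp_all add: sum.distrib)

lemma sum_trig_poly_over_unit_points:
  fixes R :: "complex multiset" and c :: real
  assumes unit: "\<And>z. z \<in># R \<Longrightarrow> cmod z = 1"
    and power_sums: "\<And>m. 1 \<le> m \<Longrightarrow> m \<le> n \<Longrightarrow> (\<Sum>z\<in>#R. z ^ m) = (if m = \<nu> then 1 else 0)"
    and "1 \<le> \<nu>" and "\<nu> \<le> n"
  shows "(\<Sum>z\<in>#R. trig_poly n a b (c - Arg2pi z)) = a \<nu> * cos (\<nu> * c) + b \<nu> * sin (\<nu> * c)"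
proof -
  define A where "A m = a m * cos (real m * c) + b m * sin (real m * c)" for m
  define B where "B m = a m * sin (real m * c) - b m * cos (real m * c)" for m
  have pointwise: "trig_poly n a b (c - Arg2pi z) = (\<Sum>m=1..n. A m * Re (z ^ m) + B m * Im (z ^ m))"
    if "z \<in># R" for z
  proof -
    have "z = cis (Arg2pi z)"
      using unit[OF that] by (simp add: cis_conv_exp complex_norm_eq_1_exp)
    then have "z ^ m = cis (real m * Arg2pi z)" for m
      by (metis Complex.DeMoivre)
    then show ?thesis
      unfolding trig_poly_def A_def B_def
      by (intro sum.cong) (simp_all add: right_diff_distrib cos_diff sin_diff algebra_simps)
  qed
  have "(\<Sum>z\<in>#R. trig_poly n a b (c - Arg2pi z))
      = (\<Sum>z\<in>#R. \<Sum>m=1..n. A m * Re (z ^ m) + B m * Im (z ^ m))"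
    using pointwise by (intro arg_cong[where f = sum_mset] image_mset_cong)
  also have "\<dots> = (\<Sum>m=1..n. \<Sum>z\<in>#R. A m * Re (z ^ m) + B m * Im (z ^ m))"
    by (rule sum_mset_sum_swap)
  also have "\<dots> = (\<Sum>m=1..n. A m * Re (\<Sum>z\<in>#R. z ^ m) + B m * Im (\<Sum>z\<in>#R. z ^ m))"
    by (simp add: sum_mset.distrib sum_mset_distrib_left Re_sum_mset Im_sum_mset)
  also have "\<dots> = (\<Sum>m=1..n. if m = \<nu> then A m else 0)"
    using power_sums by (intro sum.cong) auto
  also have "\<dots> = A \<nu>"
    using assms by simp
  finally show ?thesis by (simp add: A_def)
qed

lemma s_coeff_Suc:
  assumes "1 \<le> \<nu>"
  shows "of_nat (\<nu> * Suc j) * s_coeff \<nu> (Suc j) = - s_coeff \<nu> j"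
proof -
  have denominator: "of_nat \<nu> ^ Suc j * of_nat (fact (Suc j))
      = of_nat (\<nu> * Suc j) * (of_nat \<nu> ^ j * of_nat (fact j) :: complex)"
    by (simp add: algebra_simps)
  have "of_nat (\<nu> * Suc j) \<noteq> (0 :: complex)"
    by (simp only: of_nat_eq_0_iff) (use assms in simp)
  then show ?thesis
    unfolding s_coeff_def denominator by simp
qed

text \<open>As for \<open>exp(-z^\<nu>/\<nu>)\<close>, the derivative of \<open>s\<^sub>n\<close> is \<open>-z^(\<nu>-1) s\<^sub>n\<close>, up to the top term.\<close>

lemma s_poly_ode_partial:
  assumes "1 \<le> \<nu>"
  shows "pderiv (\<Sum>j=0..J. monom (s_coeff \<nu> j) (\<nu> * j))
           + monom 1 (\<nu> - 1) * (\<Sum>j=0..J. monom (s_coeff \<nu> j) (\<nu> * j))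
         = monom (s_coeff \<nu> J) (\<nu> * Suc J - 1)"
proof (induction J)
  case 0
  then show ?case by (simp add: mult_monom pderiv_monom)
next
  case (Suc J)
  define T where "T J = (\<Sum>j=0..J. monom (s_coeff \<nu> j) (\<nu> * j))" for J
  have "pderiv (T (Suc J)) + monom 1 (\<nu> - 1) * T (Suc J)
      = (pderiv (T J) + monom 1 (\<nu> - 1) * T J) + pderiv (monom (s_coeff \<nu> (Suc J)) (\<nu> * Suc J))
        + monom 1 (\<nu> - 1) * monom (s_coeff \<nu> (Suc J)) (\<nu> * Suc J)"
    by (simp only: T_def sum.atLeast0_atMost_Suc pderiv_add distrib_left add_ac)
  also have "\<dots> = (monom (s_coeff \<nu> J) (\<nu> * Suc J - 1)
        + monom (of_nat (\<nu> * Suc J) * s_coeff \<nu> (Suc J)) (\<nu> * Suc J - 1))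
        + monom (s_coeff \<nu> (Suc J)) (\<nu> - 1 + \<nu> * Suc J)"
    using Suc.IH by (simp only: T_def pderiv_monom mult_monom mult_1)
  also have "\<dots> = monom (s_coeff \<nu> (Suc J)) (\<nu> * Suc (Suc J) - 1)"
  proof -
    have "\<nu> - 1 + \<nu> * Suc J = \<nu> * Suc (Suc J) - 1"
      using assms by simp
    then show ?thesis
      by (simp only: add_monom s_coeff_Suc[OF assms] add.right_inverse monom_eq_0 add_0_left)
  qed
  finally show ?case by (simp only: T_def)
qed

context
  fixes n \<nu> :: nat
  assumes \<nu>_pos: "1 \<le> \<nu>" and n_ge_2: "2 \<le> n"
begin

lemma mult_le_if_le_div: "j \<le> n div \<nu> \<Longrightarrow> \<nu> * j \<le> n"
  by (meson dual_order.trans mult_le_mono2 times_div_less_eq_dividend)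

lemma poly_s_poly_eq_exp_partial_sum:
  "poly (s_poly n \<nu>) z = (\<Sum>j=0..n div \<nu>. (- (z ^ \<nu>) / of_nat \<nu>) ^ j / fact j)"
  unfolding s_poly_def poly_sum poly_monom
proof (intro sum.cong refl)
  fix j
  have "- (z ^ \<nu>) / of_nat \<nu> = (-1) * (z ^ \<nu> / of_nat \<nu>)"
    by simp
  then have "(- (z ^ \<nu>) / of_nat \<nu>) ^ j = (-1) ^ j * z ^ (\<nu> * j) / of_nat \<nu> ^ j"
    by (simp only: power_mult_distrib power_divide power_mult times_divide_eq_right)
  then show "s_coeff \<nu> j * z ^ (\<nu> * j) = (- (z ^ \<nu>) / of_nat \<nu>) ^ j / fact j"
    by (simp add: s_coeff_def divide_inverse inverse_mult_distrib mult_ac)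
qed

lemma s_poly_nonzero_in_closed_disc:
  assumes "cmod z \<le> 1"
  shows "poly (s_poly n \<nu>) z \<noteq> 0"
proof -
  define w where "w = - (z ^ \<nu>) / of_nat \<nu>"
  have norm_w: "cmod w = cmod z ^ \<nu> / real \<nu>"
    by (simp add: w_def norm_divide norm_power)
  have "cmod z ^ \<nu> \<le> 1"
    using assms by (simp add: power_le_one)
  then have "cmod w \<le> 1 / real \<nu>"
    unfolding norm_w by (simp add: divide_right_mono)
  show ?thesis
  proof (cases "n div \<nu> = 1")
    case True
    then have "2 \<le> real \<nu>" using n_ge_2 \<nu>_pos by (cases "\<nu> = 1") auto
    then have "1 / real \<nu> \<le> 1 / 2"
      by (intro divide_left_mono) auto
    then have "cmod w < 1"
      using \<open>cmod w \<le> 1 / real \<nu>\<close> by linarith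
    then have "1 + w \<noteq> 0"
      by (metis add.inverse_unique norm_minus_cancel norm_one order_less_irrefl)
    then show ?thesis
      unfolding poly_s_poly_eq_exp_partial_sum w_def[symmetric] True by simp
  next
    case False
    have "1 / real \<nu> \<le> 1"
      using \<nu>_pos by simp
    then have "cmod w \<le> 1"
      using \<open>cmod w \<le> 1 / real \<nu>\<close> by linarith
    then show ?thesis
      unfolding poly_s_poly_eq_exp_partial_sum w_def[symmetric]
      using False by (rule exp_partial_sum_nonzero)
  qed
qed

text \<open>On the unit circle \<open>1/u = cnj u\<close>, and \<open>s\<^sub>n\<close> has real coefficients.\<close>

lemma poly_s_rev_poly_on_circle:
  assumes "cmod u = 1"
  shows "poly (s_rev_poly n \<nu>) u = u ^ (2 * n + 1) * cnj (poly (s_poly n \<nu>) u)"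
proof -
  have unit: "u * cnj u = 1"
    using complex_norm_square[of u] assms by simp
  have termwise: "s_coeff \<nu> j * u ^ (2 * n + 1 - \<nu> * j) = u ^ (2 * n + 1) * (s_coeff \<nu> j * cnj u ^ (\<nu> * j))"
    if "j \<in> {0..n div \<nu>}" for j
  proof -
    have "2 * n + 1 = (2 * n + 1 - \<nu> * j) + \<nu> * j"
      using mult_le_if_le_div that by force
    then have "u ^ (2 * n + 1) = u ^ (2 * n + 1 - \<nu> * j) * u ^ (\<nu> * j)"
      by (metis power_add)
    then have "u ^ (2 * n + 1) * (s_coeff \<nu> j * cnj u ^ (\<nu> * j))
        = s_coeff \<nu> j * u ^ (2 * n + 1 - \<nu> * j) * (u * cnj u) ^ (\<nu> * j)"
      by (simp add: power_mult_distrib mult_ac)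
    then show ?thesis
      by (metis unit power_one mult_1_right)
  qed
  have "poly (s_rev_poly n \<nu>) u = (\<Sum>j=0..n div \<nu>. u ^ (2 * n + 1) * (s_coeff \<nu> j * cnj u ^ (\<nu> * j)))"
    unfolding s_rev_poly_def poly_sum poly_monom using termwise by (rule sum.cong[OF refl])
  also have "\<dots> = u ^ (2 * n + 1) * cnj (poly (s_poly n \<nu>) u)"
    unfolding s_poly_def poly_sum poly_monom by (simp add: sum_distrib_left s_coeff_def)
  finally show ?thesis .
qed

text \<open>Maximum modulus principle for \<open>q/s\<^sub>n\<close>, where \<open>z q(z) = z^(2n+1) s\<^sub>n(1/z)\<close>.\<close>

lemma norm_poly_s_rev_poly_le:
  assumes "cmod z \<le> 1"
  shows "cmod (poly (s_rev_poly n \<nu>) z) \<le> cmod z * cmod (poly (s_poly n \<nu>) z)"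
proof -
  define q where "q w = (\<Sum>j=0..n div \<nu>. s_coeff \<nu> j * w ^ (2 * n - \<nu> * j))" for w
  have factor: "poly (s_rev_poly n \<nu>) w = w * q w" for w
    unfolding s_rev_poly_def poly_sum poly_monom q_def sum_distrib_left
  proof (intro sum.cong refl)
    fix j assume "j \<in> {0..n div \<nu>}"
    then have "2 * n + 1 - \<nu> * j = Suc (2 * n - \<nu> * j)"
      using mult_le_if_le_div by force
    then show "s_coeff \<nu> j * w ^ (2 * n + 1 - \<nu> * j) = w * (s_coeff \<nu> j * w ^ (2 * n - \<nu> * j))"
      by (simp add: mult_ac)
  qed
  have "cmod (q z) \<le> cmod (poly (s_poly n \<nu>) z)"
  proof (rule norm_le_in_disc_if_norm_le_on_circle[where f = "poly (s_poly n \<nu>)" and g = q])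
    show "poly (s_poly n \<nu>) holomorphic_on cball 0 1"
      by (intro poly_holomorphic_on holomorphic_on_ident)
    show "q holomorphic_on cball 0 1"
      unfolding q_def
      by (intro holomorphic_on_sum holomorphic_on_mult holomorphic_on_const holomorphic_on_power
          holomorphic_on_ident)
    show "poly (s_poly n \<nu>) w \<noteq> 0" if "cmod w \<le> 1" for w
      using that by (rule s_poly_nonzero_in_closed_disc)
    show "cmod (q u) \<le> cmod (poly (s_poly n \<nu>) u)" if "cmod u = 1" for u
    proof -
      have "cmod (q u) = cmod (u * q u)"
        using that by (simp add: norm_mult)
      also have "\<dots> = cmod (poly (s_poly n \<nu>) u)"
        unfolding factor[symmetric] poly_s_rev_poly_on_circle[OF that]
        using that by (simp add: norm_mult norm_power)
      finally show ?thesis by simp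
    qed
  qed (rule assms)
  then show ?thesis
    unfolding factor norm_mult by (simp add: mult_left_mono)
qed

lemma root_poly_nonzero_in_open_disc:
  assumes "cmod z < 1"
  shows "poly (root_poly n \<nu>) z \<noteq> 0"
proof
  assume "poly (root_poly n \<nu>) z = 0"
  then have "poly (s_rev_poly n \<nu>) z = - poly (s_poly n \<nu>) z"
    by (simp add: root_poly_def eq_neg_iff_add_eq_0 add.commute)
  then have "cmod (poly (s_poly n \<nu>) z) \<le> cmod z * cmod (poly (s_poly n \<nu>) z)"
    using norm_poly_s_rev_poly_le[of z] assms by simp
  moreover have "cmod z * cmod (poly (s_poly n \<nu>) z) < cmod (poly (s_poly n \<nu>) z)"
    using s_poly_nonzero_in_closed_disc[of z] assms by (simp add: mult_strict_right_mono)
  ultimately show False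
    by linarith
qed

lemma coeff_s_poly_eq_0: "n < k \<Longrightarrow> coeff (s_poly n \<nu>) k = 0"
  unfolding s_poly_def coeff_sum by (auto intro!: sum.neutral dest!: mult_le_if_le_div)

lemma coeff_s_poly_0: "coeff (s_poly n \<nu>) 0 = 1"
  using \<nu>_pos by (simp add: s_poly_def coeff_sum s_coeff_def)

lemma coeff_s_rev_poly:
  "coeff (s_rev_poly n \<nu>) k = (if k \<le> 2 * n + 1 then coeff (s_poly n \<nu>) (2 * n + 1 - k) else 0)"
proof (cases "k \<le> 2 * n + 1")
  case True
  have "2 * n + 1 - \<nu> * j = k \<longleftrightarrow> \<nu> * j = 2 * n + 1 - k" if "j \<in> {0..n div \<nu>}" for j
    using True mult_le_if_le_div[of j] that by auto
  then have "coeff (s_rev_poly n \<nu>) k = coeff (s_poly n \<nu>) (2 * n + 1 - k)"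
    unfolding s_rev_poly_def s_poly_def coeff_sum coeff_monom by (intro sum.cong) auto
  then show ?thesis
    using True by simp
next
  case False
  then show ?thesis
    unfolding s_rev_poly_def coeff_sum coeff_monom by (auto intro!: sum.neutral)
qed

lemma coeff_s_rev_poly_eq_0: "k \<le> n \<Longrightarrow> coeff (s_rev_poly n \<nu>) k = 0"
  by (simp add: coeff_s_rev_poly coeff_s_poly_eq_0)

lemma coeff_root_poly:
  "coeff (root_poly n \<nu>) k
     = coeff (s_poly n \<nu>) k + (if k \<le> 2 * n + 1 then coeff (s_poly n \<nu>) (2 * n + 1 - k) else 0)"
  by (simp add: root_poly_def coeff_s_rev_poly)

lemma degree_root_poly: "degree (root_poly n \<nu>) = 2 * n + 1"
  and lead_coeff_root_poly: "lead_coeff (root_poly n \<nu>) = 1"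
proof -
  have top: "coeff (root_poly n \<nu>) (2 * n + 1) = 1"
    by (simp add: coeff_root_poly coeff_s_poly_eq_0 coeff_s_poly_0)
  have "degree (root_poly n \<nu>) \<le> 2 * n + 1"
    by (intro degree_le) (simp add: coeff_root_poly coeff_s_poly_eq_0)
  moreover have "2 * n + 1 \<le> degree (root_poly n \<nu>)"
    using top by (intro le_degree) simp
  ultimately show degree: "degree (root_poly n \<nu>) = 2 * n + 1"
    by simp
  show "lead_coeff (root_poly n \<nu>) = 1"
    using top degree by simp
qed

lemma reflect_root_poly: "reflect_poly (root_poly n \<nu>) = root_poly n \<nu>"
proof (rule poly_eqI)
  fix k
  show "coeff (reflect_poly (root_poly n \<nu>)) k = coeff (root_poly n \<nu>) k"
    unfolding coeff_reflect_poly degree_root_poly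
    by (cases "k \<le> 2 * n + 1") (auto simp: coeff_root_poly coeff_s_poly_eq_0)
qed

lemma root_poly_ode_low_coeffs:
  assumes "k < n"
  shows "coeff (pderiv (root_poly n \<nu>) + monom 1 (\<nu> - 1) * root_poly n \<nu>) k = 0"
proof -
  define S where "S = s_poly n \<nu>"
  define Q where "Q = s_rev_poly n \<nu>"
  define J where "J = n div \<nu>"
  have "n mod \<nu> < \<nu>"
    using \<nu>_pos by simp
  moreover have "\<nu> * J + n mod \<nu> = n"
    unfolding J_def by (rule mult_div_mod_eq)
  ultimately have "k < \<nu> * Suc J - 1"
    using assms by simp
  moreover have "pderiv S + monom 1 (\<nu> - 1) * S = monom (s_coeff \<nu> J) (\<nu> * Suc J - 1)"
    unfolding S_def s_poly_def J_def by (rule s_poly_ode_partial[OF \<nu>_pos])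
  ultimately have low_S: "coeff (pderiv S + monom 1 (\<nu> - 1) * S) k = 0"
    by simp
  have low_Q: "coeff (pderiv Q + monom 1 (\<nu> - 1) * Q) k = 0"
    unfolding Q_def coeff_add coeff_pderiv coeff_monom_mult
    using assms by (simp add: coeff_s_rev_poly_eq_0)
  have "pderiv (root_poly n \<nu>) + monom 1 (\<nu> - 1) * root_poly n \<nu>
      = (pderiv S + monom 1 (\<nu> - 1) * S) + (pderiv Q + monom 1 (\<nu> - 1) * Q)"
    unfolding root_poly_def S_def Q_def pderiv_add distrib_left by (simp only: add_ac)
  then show ?thesis
    using low_S low_Q by simp
qed

lemma power_sums_root_poly:
  assumes "1 \<le> m" and "m \<le> n"
  shows "(\<Sum>z\<in>#proots (root_poly n \<nu>). z ^ m) = (if m = \<nu> then 1 else 0)"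
proof -
  define F where "F = (\<Prod>z\<in>#proots (root_poly n \<nu>). 1 - fps_const z * fps_X)"
  have "F = fps_of_poly (root_poly n \<nu>)"
    unfolding F_def by (rule fps_of_poly_self_reciprocal[OF reflect_root_poly lead_coeff_root_poly, symmetric])
  then have "fps_deriv F + fps_X ^ (\<nu> - 1) * F
      = fps_of_poly (pderiv (root_poly n \<nu>) + monom 1 (\<nu> - 1) * root_poly n \<nu>)"
    by (simp add: fps_of_poly_add fps_of_poly_mult fps_of_poly_pderiv fps_of_poly_monom')
  then have "(fps_deriv F + fps_X ^ (\<nu> - 1) * F) $ k = 0" if "k < n" for k
    using root_poly_ode_low_coeffs[OF that] by simp
  then have "(\<Sum>z\<in>#proots (root_poly n \<nu>). z ^ Suc (m - 1)) = (fps_X ^ (\<nu> - 1)) $ (m - 1)"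
    unfolding F_def using assms by (intro power_sums_from_fps_ode[where N = n]) auto
  then show ?thesis
    using assms \<nu>_pos by auto
qed

lemma root_poly_roots_on_circle:
  assumes "z \<in># proots (root_poly n \<nu>)"
  shows "cmod z = 1"
proof (rule roots_on_circle_if_reflect_poly_eq[OF reflect_root_poly root_poly_nonzero_in_open_disc])
  have "root_poly n \<nu> \<noteq> 0"
    using lead_coeff_root_poly by auto
  then show "poly (root_poly n \<nu>) z = 0"
    using assms by simp
qed

end

theorem corollary2p2:
  fixes n \<nu> :: nat and a b :: "nat \<Rightarrow> real"
  assumes "n \<ge> 2" and "1 \<le> \<nu>" and "\<nu> \<le> n"
  shows "a \<nu> = (\<Sum>z\<in>#proots (root_poly n \<nu>). trig_poly n a b (- Arg2pi z))
       \<and> b \<nu> = (\<Sum>z\<in>#proots (root_poly n \<nu>). trig_poly n a b (pi / (2 * real \<nu>) - Arg2pi z))"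
proof -
  note unit = root_poly_roots_on_circle[OF assms(2,1)]
    and power_sums = power_sums_root_poly[OF assms(2,1)]
  have "(\<Sum>z\<in>#proots (root_poly n \<nu>). trig_poly n a b (0 - Arg2pi z)) = a \<nu>"
    using sum_trig_poly_over_unit_points[OF unit power_sums assms(2,3), of a b 0] by simp
  moreover have "(\<Sum>z\<in>#proots (root_poly n \<nu>). trig_poly n a b (pi / (2 * real \<nu>) - Arg2pi z))
      = a \<nu> * cos (real \<nu> * (pi / (2 * real \<nu>))) + b \<nu> * sin (real \<nu> * (pi / (2 * real \<nu>)))"
    by (rule sum_trig_poly_over_unit_points[OF unit power_sums assms(2,3)])
  moreover have "real \<nu> * (pi / (2 * real \<nu>)) = pi / 2"
    using assms(2) by simp
  ultimately show ?thesis
    using assms(2) by simp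
qed

end
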